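(* Let $\mathcal E$ be a quantum channel from $\mathcal L(\mathcal H_0)$ to $\mathcal L(\mathcal H_1)$ with Choi–Jamiołkowski operator $E=\sum_m|K_m\rangle\!\rangle\langle\!\langle K_m|\in\mathcal L(\mathcal H_1\otimes\mathcal H_0)$, where the $|K_m\rangle\!\rangle$ are linearly independent (e.g. eigenvectors of $E$ scaled by square roots of the nonzero eigenvalues). The following two conditions are equivalent: (i) $\sum_{m,n}\alpha_{mn}K_m^\dagger K_n=0$ with $\alpha_{mn}\in\mathbb C$ implies $\alpha_{mn}=0$ for all $m,n$; (ii) $\sum_{m,n}\alpha_{mn}|K_m\rangle\!\rangle\langle\!\langle K_n|+\sum_a\beta_a\,\sigma_a\otimes I_0+\sum_{a,b}\gamma_{ab}\,\sigma_a\otimes\tau_b=0$ with complex coefficients implies $\alpha_{mn}=0$, $\beta_a=0$, $\gamma_{ab}=0$ for all indices.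
   Context: Finite-dimensional Hilbert spaces, $d_k=\dim\mathcal H_k$. For $A:\mathcal H_0\to\mathcal H_1$, $|A\rangle\!\rangle=(A\otimes I_0)|I\rangle\!\rangle\in\mathcal H_1\otimes\mathcal H_0$ with $|I\rangle\!\rangle=\sum_i|i\rangle\otimes|i\rangle\in\mathcal H_0\otimes\mathcal H_0$ for a fixed orthonormal basis; the Choi–Jamiołkowski operator of $\mathcal E$ is $(\mathcal E\otimes\mathrm{id})(|I\rangle\!\rangle\langle\!\langle I|)$, and the $K_m$ are then Kraus operators of $\mathcal E$. $\{\sigma_a\}_{a=2}^{d_1^2}$ and $\{\tau_b\}_{b=2}^{d_0^2}$ are bases of traceless hermitian operators on $\mathcal H_1$ and $\mathcal H_0$ respectively. *)

theory Defs
  imports "HOL-Analysis.Analysis"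
begin

text \<open>Finite-dimensional Hilbert spaces are modelled by finite index types:
  H_0 = complex^'a, H_1 = complex^'b. An operator A : H_0 -> H_1 is a matrix
  complex^'a^'b (rows indexed by 'b). H_1 (x) H_0 = complex^('b \<times> 'a).\<close>

definition qadj :: "complex^'n^'m \<Rightarrow> complex^'m^'n" where
  "qadj M = (\<chi> j i. cnj (M $ i $ j))"

definition cscale :: "complex \<Rightarrow> complex^'n^'m \<Rightarrow> complex^'n^'m" where
  "cscale c M = (\<chi> i j. c * M $ i $ j)"

text \<open>Double-ket |A>> = (A (x) I_0)|I>>, |I>> = sum_i |i> (x) |i>; its (k,i) component is A_{k i}.\<close>
definition dket :: "complex^'a^'b \<Rightarrow> complex^('b \<times> 'a)" where
  "dket A = (\<chi> p. A $ fst p $ snd p)"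

definition ketbra :: "complex^'n \<Rightarrow> complex^'n \<Rightarrow> complex^'n^'n" where
  "ketbra u v = (\<chi> p q. u $ p * cnj (v $ q))"

definition qtensor :: "complex^'m^'m \<Rightarrow> complex^'n^'n \<Rightarrow> complex^('m \<times> 'n)^('m \<times> 'n)" where
  "qtensor A B = (\<chi> p q. A $ fst p $ fst q * B $ snd p $ snd q)"

definition qtrace :: "complex^'n^'n \<Rightarrow> complex" where
  "qtrace M = (\<Sum>i\<in>UNIV. M $ i $ i)"

definition qhermitian :: "complex^'n^'n \<Rightarrow> bool" where
  "qhermitian M \<longleftrightarrow> qadj M = M"

definition traceless_herm_basis :: "(nat \<Rightarrow> complex^'n^'n) \<Rightarrow> bool" where
  "traceless_herm_basis \<sigma> \<longleftrightarrow>
     (\<forall>a\<in>{2..CARD('n)^2}. qhermitian (\<sigma> a) \<and> qtrace (\<sigma> a) = 0) \<and>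
     (\<forall>c::nat \<Rightarrow> real. (\<Sum>a=2..CARD('n)^2. cscale (complex_of_real (c a)) (\<sigma> a)) = 0
         \<longrightarrow> (\<forall>a\<in>{2..CARD('n)^2}. c a = 0)) \<and>
     (\<forall>M. qhermitian M \<and> qtrace M = 0 \<longrightarrow>
         (\<exists>c::nat \<Rightarrow> real. M = (\<Sum>a=2..CARD('n)^2. cscale (complex_of_real (c a)) (\<sigma> a))))"

end

theory Submission
  imports Defs
begin

text \<open>
  Write \<open>G(\<alpha>) = \<Sum>\<^sub>m\<^sub>n \<alpha>\<^sub>m\<^sub>n K\<^sub>m\<^sup>\<dagger> K\<^sub>n\<close> (an operator on H_0) and
  \<open>C(\<alpha>) = \<Sum>\<^sub>m\<^sub>n \<alpha>\<^sub>m\<^sub>n |K\<^sub>m\<rangle>\<rangle>\<langle>\<langle>K\<^sub>n|\<close> (an operator on H_1 \<otimes> H_0).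
  The bridge between conditions (i) and (ii) is the partial trace over H_1:
  a direct computation gives \<open>tr\<^sub>1 C(\<alpha>) = G(\<alpha>\<^sup>T)\<^sup>T\<close>, and the kernel of
  \<open>tr\<^sub>1\<close> is exactly the span \<open>V\<close> of the operators \<open>\<sigma>\<^sub>a \<otimes> I\<close> and \<open>\<sigma>\<^sub>a \<otimes> \<tau>\<^sub>b\<close>,
  which are linearly independent.  Hence (i) says that \<open>G\<close>, equivalently
  \<open>tr\<^sub>1 \<circ> C\<close>, is injective, while (ii) says that \<open>C\<close> is injective and its range
  meets \<open>V = ker tr\<^sub>1\<close> only in 0 -- the same condition.
\<close>

lemma cscale_nth [simp]: "cscale c M $ i $ j = c * M $ i $ j"
  by (simp add: cscale_def)

lemma cscale_0_left [simp]: "cscale 0 M = 0"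
  and cscale_0_right [simp]: "cscale c 0 = 0"
  by (simp_all add: vec_eq_iff)

lemma qadj_nth [simp]: "qadj M $ i $ j = cnj (M $ j $ i)"
  by (simp add: qadj_def)

lemma qadj_add [simp]: "qadj (A + B) = qadj A + qadj B"
  and qadj_diff [simp]: "qadj (A - B) = qadj A - qadj B"
  and qadj_qadj [simp]: "qadj (qadj A) = A"
  and qadj_cscale [simp]: "qadj (cscale c A) = cscale (cnj c) (qadj A)"
  by (simp_all add: vec_eq_iff)

lemma qtrace_qadj [simp]: "qtrace (qadj A) = cnj (qtrace A)"
  by (simp add: qtrace_def cnj_sum)

lemma qtrace_0 [simp]: "qtrace 0 = 0"
  by (simp add: qtrace_def)

lemma qtrace_add [simp]: "qtrace (A + B) = qtrace A + qtrace B"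
  by (simp add: qtrace_def sum.distrib)

lemma qtrace_diff [simp]: "qtrace (A - B) = qtrace A - qtrace B"
  by (simp add: qtrace_def sum_subtractf)

lemma qtrace_cscale [simp]: "qtrace (cscale c A) = c * qtrace A"
  by (simp add: qtrace_def sum_distrib_left)

lemma qtrace_sum [simp]: "qtrace (\<Sum>a\<in>S. A a) = (\<Sum>a\<in>S. qtrace (A a))"
  by (simp add: qtrace_def sum.swap[of _ S])

lemma qtrace_mat_1 [simp]: "qtrace (mat 1 :: complex^'n^'n) = of_nat CARD('n)"
  by (simp add: qtrace_def mat_def)

subsection \<open>Traceless hermitian bases are complex bases\<close>

lemma hermitian_real_comb:
  assumes "\<forall>a\<in>S. qhermitian (\<sigma> a)"
  shows "qhermitian (\<Sum>a\<in>S. cscale (complex_of_real (x a)) (\<sigma> a))"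
  using assms unfolding qhermitian_def vec_eq_iff
  by (simp add: cnj_sum)

lemma complex_comb_split:
  "(\<Sum>a\<in>S. cscale (c a) (\<sigma> a))
   = (\<Sum>a\<in>S. cscale (complex_of_real (Re (c a))) (\<sigma> a))
     + cscale \<i> (\<Sum>a\<in>S. cscale (complex_of_real (Im (c a))) (\<sigma> a))"
proof -
  have "c a * s = complex_of_real (Re (c a)) * s + \<i> * (complex_of_real (Im (c a)) * s)" for a s
    by (simp add: complex_eq_iff)
  then show ?thesis
    by (simp add: vec_eq_iff sum_distrib_left sum.distrib[symmetric])
qed

lemma hermitian_pair_zero:
  assumes "qhermitian M" "qhermitian N" "M + cscale \<i> N = 0"
  shows "M = 0 \<and> N = 0"
proof -
  have sum0: "M $ p $ q + \<i> * N $ p $ q = 0" for p q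
    using assms(3) by (simp add: vec_eq_iff)
  have "cnj (M $ p $ q) = M $ q $ p" "cnj (N $ p $ q) = N $ q $ p" for p q
    using assms(1,2) unfolding qhermitian_def by (metis qadj_nth)+
  then have diff0: "M $ p $ q - \<i> * N $ p $ q = 0" for p q
    using arg_cong[OF sum0[of q p], of cnj] by simp
  show ?thesis
    using sum0 diff0 by (simp add: vec_eq_iff)
qed

lemma herm_basis_complex_indep:
  fixes \<sigma> :: "nat \<Rightarrow> complex^'n^'n"
  assumes B: "traceless_herm_basis \<sigma>"
    and zero: "(\<Sum>a=2..CARD('n)^2. cscale (c a) (\<sigma> a)) = 0"
  shows "\<forall>a\<in>{2..CARD('n)^2}. c a = 0"
proof -
  let ?comb = "\<lambda>x. \<Sum>a=2..CARD('n)^2. cscale (complex_of_real (x a)) (\<sigma> a)"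
  have herm: "qhermitian (?comb x)" for x
    using B unfolding traceless_herm_basis_def by (intro hermitian_real_comb) blast
  have real_indep: "?comb x = 0 \<Longrightarrow> \<forall>a\<in>{2..CARD('n)^2}. x a = 0" for x
    using B unfolding traceless_herm_basis_def by blast
  have "?comb (\<lambda>a. Re (c a)) = 0 \<and> ?comb (\<lambda>a. Im (c a)) = 0"
    using zero herm by (intro hermitian_pair_zero) (simp_all add: complex_comb_split[symmetric])
  then show ?thesis
    using real_indep[of "\<lambda>a. Re (c a)"] real_indep[of "\<lambda>a. Im (c a)"]
    by (simp add: complex_eq_iff)
qed

lemma hermitian_parts:
  fixes Z :: "complex^'n^'n"
  defines "H \<equiv> cscale (1/2) (Z + qadj Z)" and "H' \<equiv> cscale (-\<i>/2) (Z - qadj Z)"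
  shows "Z = H + cscale \<i> H'" and "qhermitian H" and "qhermitian H'"
    and "qtrace Z = 0 \<Longrightarrow> qtrace H = 0 \<and> qtrace H' = 0"
proof -
  show "Z = H + cscale \<i> H'" unfolding H_def H'_def by (simp add: vec_eq_iff algebra_simps)
  show "qhermitian H" unfolding qhermitian_def H_def by (simp add: add.commute)
  show "qhermitian H'" unfolding qhermitian_def H'_def by (simp add: vec_eq_iff algebra_simps)
  show "qtrace Z = 0 \<Longrightarrow> qtrace H = 0 \<and> qtrace H' = 0"
    unfolding H_def H'_def by simp
qed

lemma herm_basis_complex_span:
  fixes \<sigma> :: "nat \<Rightarrow> complex^'n^'n"
  assumes B: "traceless_herm_basis \<sigma>" and tr: "qtrace Z = 0"
  shows "\<exists>c. Z = (\<Sum>a=2..CARD('n)^2. cscale (c a) (\<sigma> a))"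
proof -
  let ?comb = "\<lambda>x. \<Sum>a=2..CARD('n)^2. cscale (complex_of_real (x a)) (\<sigma> a)"
  have real_span: "qhermitian M \<Longrightarrow> qtrace M = 0 \<Longrightarrow> \<exists>x. M = ?comb x" for M
    using B unfolding traceless_herm_basis_def by blast
  obtain H H' where Z: "Z = H + cscale \<i> H'"
    and H: "qhermitian H" "qtrace H = 0" and H': "qhermitian H'" "qtrace H' = 0"
    using hermitian_parts[of Z] tr by blast
  obtain x where x: "H = ?comb x" using real_span H by blast
  obtain y where y: "H' = ?comb y" using real_span H' by blast
  define c where "c a = complex_of_real (x a) + \<i> * complex_of_real (y a)" for a
  have "Z = (\<Sum>a=2..CARD('n)^2. cscale (c a) (\<sigma> a))"
    unfolding Z x y complex_comb_split[of c] by (simp add: c_def)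
  then show ?thesis by blast
qed

lemma herm_basis_identity_span:
  fixes \<sigma> :: "nat \<Rightarrow> complex^'n^'n"
  assumes B: "traceless_herm_basis \<sigma>"
  shows "\<exists>d c. M = cscale d (mat 1) + (\<Sum>a=2..CARD('n)^2. cscale (c a) (\<sigma> a))"
proof -
  define d where "d = qtrace M / of_nat CARD('n)"
  have "qtrace (M - cscale d (mat 1)) = 0"
    by (simp add: d_def)
  then obtain c where "M - cscale d (mat 1) = (\<Sum>a=2..CARD('n)^2. cscale (c a) (\<sigma> a))"
    using herm_basis_complex_span[OF B] by blast
  then have "M = cscale d (mat 1) + (\<Sum>a=2..CARD('n)^2. cscale (c a) (\<sigma> a))"
    by (simp add: algebra_simps)
  then show ?thesis by blast
qed

text \<open>\<dots> and is still linearly independent (take the trace first).\<close>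

lemma herm_basis_identity_indep:
  fixes \<sigma> :: "nat \<Rightarrow> complex^'n^'n"
  assumes B: "traceless_herm_basis \<sigma>"
    and zero: "cscale d (mat 1) + (\<Sum>a=2..CARD('n)^2. cscale (c a) (\<sigma> a)) = 0"
  shows "d = 0 \<and> (\<forall>a\<in>{2..CARD('n)^2}. c a = 0)"
proof -
  have "\<forall>a\<in>{2..CARD('n)^2}. qtrace (\<sigma> a) = 0"
    using B unfolding traceless_herm_basis_def by blast
  then have "qtrace (\<Sum>a=2..CARD('n)^2. cscale (c a) (\<sigma> a)) = 0"
    by (simp add: sum.neutral)
  then have "d * of_nat CARD('n) = 0"
    using arg_cong[OF zero, of qtrace] by simp
  then have d: "d = 0" by simp
  then have "(\<Sum>a=2..CARD('n)^2. cscale (c a) (\<sigma> a)) = 0"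
    using zero by simp
  with d show ?thesis using herm_basis_complex_indep[OF B] by blast
qed

subsection \<open>The partial trace over H_1\<close>

definition ptrace1 :: "complex^('b::finite \<times> 'a::finite)^('b \<times> 'a) \<Rightarrow> complex^'a^'a" where
  "ptrace1 X = (\<chi> i j. \<Sum>k\<in>UNIV. X $ (k, i) $ (k, j))"

lemma ptrace1_0 [simp]: "ptrace1 0 = 0"
  and ptrace1_add [simp]: "ptrace1 (X + Y) = ptrace1 X + ptrace1 Y"
  and ptrace1_cscale [simp]: "ptrace1 (cscale c X) = cscale c (ptrace1 X)"
  and ptrace1_sum [simp]: "ptrace1 (\<Sum>a\<in>S. F a) = (\<Sum>a\<in>S. ptrace1 (F a))"
  by (simp_all add: ptrace1_def vec_eq_iff sum.distrib sum_distrib_left sum.swap[of _ S])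

lemma ptrace1_qtensor [simp]: "ptrace1 (qtensor S T) = cscale (qtrace S) T"
  by (simp add: ptrace1_def qtensor_def qtrace_def vec_eq_iff sum_distrib_right)

definition gram_comb :: "(nat \<Rightarrow> complex^'a::finite^'b::finite) \<Rightarrow> nat \<Rightarrow> (nat \<Rightarrow> nat \<Rightarrow> complex) \<Rightarrow> complex^'a^'a" where
  "gram_comb K r \<alpha> = (\<Sum>m<r. \<Sum>n<r. cscale (\<alpha> m n) (qadj (K m) ** K n))"

definition choi_comb :: "(nat \<Rightarrow> complex^'a::finite^'b::finite) \<Rightarrow> nat \<Rightarrow> (nat \<Rightarrow> nat \<Rightarrow> complex) \<Rightarrow> complex^('b \<times> 'a)^('b \<times> 'a)" where
  "choi_comb K r \<alpha> = (\<Sum>m<r. \<Sum>n<r. cscale (\<alpha> m n) (ketbra (dket (K m)) (dket (K n))))"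

lemma ptrace1_ketbra_dket: "ptrace1 (ketbra (dket A) (dket B)) = transpose (qadj B ** A)"
  by (simp add: ptrace1_def ketbra_def dket_def transpose_def matrix_matrix_mult_def vec_eq_iff mult.commute)

lemma ptrace1_choi_comb: "ptrace1 (choi_comb K r \<alpha>) = transpose (gram_comb K r (\<lambda>m n. \<alpha> n m))"
  unfolding choi_comb_def gram_comb_def
  by (simp add: ptrace1_ketbra_dket vec_eq_iff transpose_def) (intro allI sum.swap)

lemma ptrace1_choi_comb_eq_0: "ptrace1 (choi_comb K r \<alpha>) = 0 \<longleftrightarrow> gram_comb K r (\<lambda>m n. \<alpha> n m) = 0"
  by (metis ptrace1_choi_comb transpose_iff transpose_mat mat_0)

subsection \<open>The kernel of the partial trace\<close>

lemma qtensor_add_right [simp]: "qtensor S (A + B) = qtensor S A + qtensor S B"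
  and qtensor_cscale_right [simp]: "qtensor S (cscale c A) = cscale c (qtensor S A)"
  and qtensor_sum_right [simp]: "qtensor S (\<Sum>b\<in>T. F b) = (\<Sum>b\<in>T. qtensor S (F b))"
  by (simp_all add: qtensor_def vec_eq_iff algebra_simps sum_distrib_left)

definition tensor_terms :: "(nat \<Rightarrow> complex^'b::finite^'b) \<Rightarrow> (nat \<Rightarrow> complex^'a::finite^'a)
    \<Rightarrow> (nat \<Rightarrow> complex) \<Rightarrow> (nat \<Rightarrow> nat \<Rightarrow> complex) \<Rightarrow> complex^('b \<times> 'a)^('b \<times> 'a)" where
  "tensor_terms \<sigma> \<tau> \<beta> \<gamma> =
     (\<Sum>a=2..CARD('b)^2. cscale (\<beta> a) (qtensor (\<sigma> a) (mat 1)))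
     + (\<Sum>a=2..CARD('b)^2. \<Sum>b=2..CARD('a)^2. cscale (\<gamma> a b) (qtensor (\<sigma> a) (\<tau> b)))"

lemma tensor_terms_factor:
  fixes \<sigma> :: "nat \<Rightarrow> complex^'b::finite^'b" and \<tau> :: "nat \<Rightarrow> complex^'a::finite^'a"
  shows "tensor_terms \<sigma> \<tau> \<beta> \<gamma> = (\<Sum>a=2..CARD('b)^2.
     qtensor (\<sigma> a) (cscale (\<beta> a) (mat 1) + (\<Sum>b=2..CARD('a)^2. cscale (\<gamma> a b) (\<tau> b))))"
  by (simp add: tensor_terms_def sum.distrib)

lemma tensor_terms_uminus: "tensor_terms \<sigma> \<tau> (\<lambda>a. - \<beta> a) (\<lambda>a b. - \<gamma> a b) = - tensor_terms \<sigma> \<tau> \<beta> \<gamma>"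
  by (simp add: tensor_terms_def vec_eq_iff sum_negf)

lemma tensor_comb_indep:
  fixes \<sigma> :: "nat \<Rightarrow> complex^'b::finite^'b" and Y :: "nat \<Rightarrow> complex^'a::finite^'a"
  assumes B: "traceless_herm_basis \<sigma>"
    and zero: "(\<Sum>a=2..CARD('b)^2. qtensor (\<sigma> a) (Y a)) = 0"
  shows "\<forall>a\<in>{2..CARD('b)^2}. Y a = 0"
proof -
  have "(\<Sum>a=2..CARD('b)^2. cscale (Y a $ i $ j) (\<sigma> a)) = 0" for i j
    using zero by (simp add: vec_eq_iff qtensor_def mult.commute)
  then have "\<forall>a\<in>{2..CARD('b)^2}. Y a $ i $ j = 0" for i j
    by (rule herm_basis_complex_indep[OF B])
  then show ?thesis by (simp add: vec_eq_iff)
qed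

text \<open>Every operator with vanishing partial trace has the form \<open>\<Sum>\<^sub>a \<sigma>\<^sub>a \<otimes> Y\<^sub>a\<close>: for fixed
  \<open>i, j\<close> the block \<open>(k, l) \<mapsto> X (k, i) (l, j)\<close> is traceless, hence a combination of the \<open>\<sigma>\<^sub>a\<close>.\<close>

lemma ptrace1_kernel:
  fixes \<sigma> :: "nat \<Rightarrow> complex^'b::finite^'b" and X :: "complex^('b \<times> 'a::finite)^('b \<times> 'a)"
  assumes B: "traceless_herm_basis \<sigma>" and tr: "ptrace1 X = 0"
  shows "\<exists>Y. X = (\<Sum>a=2..CARD('b)^2. qtensor (\<sigma> a) (Y a))"
proof -
  define block :: "'a \<Rightarrow> 'a \<Rightarrow> complex^'b^'b" where "block i j = (\<chi> k l. X $ (k, i) $ (l, j))" for i j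
  have "qtrace (block i j) = ptrace1 X $ i $ j" for i j
    by (simp add: block_def qtrace_def ptrace1_def)
  then have "\<forall>i j. \<exists>c. block i j = (\<Sum>a=2..CARD('b)^2. cscale (c a) (\<sigma> a))"
    using herm_basis_complex_span[OF B] tr by simp
  then obtain C where C: "\<And>i j. block i j = (\<Sum>a=2..CARD('b)^2. cscale (C i j a) (\<sigma> a))"
    by metis
  define Y :: "nat \<Rightarrow> complex^'a^'a" where "Y a = (\<chi> i j. C i j a)" for a
  have "X = (\<Sum>a=2..CARD('b)^2. qtensor (\<sigma> a) (Y a))"
    unfolding vec_eq_iff
  proof (intro allI)
    fix p q :: "'b \<times> 'a"
    have "X $ p $ q = block (snd p) (snd q) $ fst p $ fst q"
      by (simp add: block_def)
    then show "X $ p $ q = (\<Sum>a=2..CARD('b)^2. qtensor (\<sigma> a) (Y a)) $ p $ q"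
      by (simp add: C Y_def qtensor_def mult.commute)
  qed
  then show ?thesis by blast
qed

lemma tensor_terms_indep:
  fixes \<sigma> :: "nat \<Rightarrow> complex^'b::finite^'b" and \<tau> :: "nat \<Rightarrow> complex^'a::finite^'a"
  assumes \<sigma>: "traceless_herm_basis \<sigma>" and \<tau>: "traceless_herm_basis \<tau>"
    and zero: "tensor_terms \<sigma> \<tau> \<beta> \<gamma> = 0"
  shows "(\<forall>a\<in>{2..CARD('b)^2}. \<beta> a = 0) \<and> (\<forall>a\<in>{2..CARD('b)^2}. \<forall>b\<in>{2..CARD('a)^2}. \<gamma> a b = 0)"
proof -
  have "\<forall>a\<in>{2..CARD('b)^2}. cscale (\<beta> a) (mat 1) + (\<Sum>b=2..CARD('a)^2. cscale (\<gamma> a b) (\<tau> b)) = 0"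
    using zero unfolding tensor_terms_factor by (rule tensor_comb_indep[OF \<sigma>])
  then show ?thesis
    using herm_basis_identity_indep[OF \<tau>] by blast
qed

lemma ptrace1_tensor_terms:
  fixes \<sigma> :: "nat \<Rightarrow> complex^'b::finite^'b" and \<tau> :: "nat \<Rightarrow> complex^'a::finite^'a"
  assumes \<sigma>: "traceless_herm_basis \<sigma>"
  shows "ptrace1 (tensor_terms \<sigma> \<tau> \<beta> \<gamma>) = 0"
proof -
  have "\<forall>a\<in>{2..CARD('b)^2}. qtrace (\<sigma> a) = 0"
    using \<sigma> unfolding traceless_herm_basis_def by blast
  then show ?thesis
    unfolding tensor_terms_factor by (simp add: sum.neutral)
qed

lemma ptrace1_kernel_tensor_terms:
  fixes \<sigma> :: "nat \<Rightarrow> complex^'b::finite^'b" and \<tau> :: "nat \<Rightarrow> complex^'a::finite^'a"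
  assumes \<sigma>: "traceless_herm_basis \<sigma>" and \<tau>: "traceless_herm_basis \<tau>"
    and tr: "ptrace1 X = 0"
  shows "\<exists>\<beta> \<gamma>. X = tensor_terms \<sigma> \<tau> \<beta> \<gamma>"
proof -
  obtain Y where Y: "X = (\<Sum>a=2..CARD('b)^2. qtensor (\<sigma> a) (Y a))"
    using ptrace1_kernel[OF \<sigma> tr] by blast
  have "\<forall>a. \<exists>d c. Y a = cscale d (mat 1) + (\<Sum>b=2..CARD('a)^2. cscale (c b) (\<tau> b))"
    using herm_basis_identity_span[OF \<tau>] by blast
  then obtain \<beta> \<gamma> where "\<And>a. Y a = cscale (\<beta> a) (mat 1) + (\<Sum>b=2..CARD('a)^2. cscale (\<gamma> a b) (\<tau> b))"
    by metis
  then have "X = tensor_terms \<sigma> \<tau> \<beta> \<gamma>"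
    unfolding Y tensor_terms_factor by simp
  then show ?thesis by blast
qed

text \<open>(i) \<Longrightarrow> (ii): taking \<open>tr\<^sub>1\<close> of \<open>C(\<alpha>) + V-terms = 0\<close> gives \<open>G(\<alpha>\<^sup>T) = 0\<close>, so \<open>\<alpha> = 0\<close>;
  then the \<open>V\<close>-terms vanish and their coefficients are 0 by independence.\<close>

lemma choi_injective_if_gram_injective:
  fixes K :: "nat \<Rightarrow> complex^'a::finite^'b::finite"
    and \<sigma> :: "nat \<Rightarrow> complex^'b^'b" and \<tau> :: "nat \<Rightarrow> complex^'a^'a"
  assumes \<sigma>: "traceless_herm_basis \<sigma>" and \<tau>: "traceless_herm_basis \<tau>"
    and gram_inj: "\<forall>\<alpha>. gram_comb K r \<alpha> = 0 \<longrightarrow> (\<forall>m<r. \<forall>n<r. \<alpha> m n = 0)"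
  shows "\<forall>\<alpha> \<beta> \<gamma>. choi_comb K r \<alpha> + tensor_terms \<sigma> \<tau> \<beta> \<gamma> = 0 \<longrightarrow> (\<forall>m<r. \<forall>n<r. \<alpha> m n = 0)
      \<and> (\<forall>a\<in>{2..CARD('b)^2}. \<beta> a = 0) \<and> (\<forall>a\<in>{2..CARD('b)^2}. \<forall>b\<in>{2..CARD('a)^2}. \<gamma> a b = 0)"
proof (intro allI impI)
  fix \<alpha> \<beta> \<gamma>
  assume eq: "choi_comb K r \<alpha> + tensor_terms \<sigma> \<tau> \<beta> \<gamma> = 0"
  have "ptrace1 (choi_comb K r \<alpha>) + ptrace1 (tensor_terms \<sigma> \<tau> \<beta> \<gamma>) = 0"
    using eq by (metis ptrace1_add ptrace1_0)
  then have "gram_comb K r (\<lambda>m n. \<alpha> n m) = 0"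
    by (simp add: ptrace1_tensor_terms[OF \<sigma>] ptrace1_choi_comb_eq_0)
  then have "\<forall>m<r. \<forall>n<r. \<alpha> n m = 0"
    using gram_inj[rule_format, of "\<lambda>m n. \<alpha> n m"] by blast
  then have \<alpha>: "\<forall>m<r. \<forall>n<r. \<alpha> m n = 0" by blast
  then have "tensor_terms \<sigma> \<tau> \<beta> \<gamma> = 0"
    using eq by (simp add: choi_comb_def)
  with \<alpha> show "(\<forall>m<r. \<forall>n<r. \<alpha> m n = 0) \<and> (\<forall>a\<in>{2..CARD('b)^2}. \<beta> a = 0)
      \<and> (\<forall>a\<in>{2..CARD('b)^2}. \<forall>b\<in>{2..CARD('a)^2}. \<gamma> a b = 0)"
    using tensor_terms_indep[OF \<sigma> \<tau>] by blast
qed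

text \<open>(ii) \<Longrightarrow> (i): if \<open>G(\<alpha>) = 0\<close> then \<open>C(\<alpha>\<^sup>T)\<close> lies in \<open>ker tr\<^sub>1 = V\<close>, i.e. \<open>C(\<alpha>\<^sup>T)\<close> minus
  suitable \<open>V\<close>-terms vanishes, so \<open>\<alpha>\<^sup>T = 0\<close> by (ii).\<close>

lemma gram_injective_if_choi_injective:
  fixes K :: "nat \<Rightarrow> complex^'a::finite^'b::finite"
    and \<sigma> :: "nat \<Rightarrow> complex^'b^'b" and \<tau> :: "nat \<Rightarrow> complex^'a^'a"
  assumes \<sigma>: "traceless_herm_basis \<sigma>" and \<tau>: "traceless_herm_basis \<tau>"
    and choi_inj: "\<forall>\<alpha> \<beta> \<gamma>. choi_comb K r \<alpha> + tensor_terms \<sigma> \<tau> \<beta> \<gamma> = 0 \<longrightarrow> (\<forall>m<r. \<forall>n<r. \<alpha> m n = 0)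
      \<and> (\<forall>a\<in>{2..CARD('b)^2}. \<beta> a = 0) \<and> (\<forall>a\<in>{2..CARD('b)^2}. \<forall>b\<in>{2..CARD('a)^2}. \<gamma> a b = 0)"
  shows "\<forall>\<alpha>. gram_comb K r \<alpha> = 0 \<longrightarrow> (\<forall>m<r. \<forall>n<r. \<alpha> m n = 0)"
proof (rule allI, rule impI)
  fix \<alpha>
  assume "gram_comb K r \<alpha> = 0"
  then have "ptrace1 (choi_comb K r (\<lambda>m n. \<alpha> n m)) = 0"
    by (simp add: ptrace1_choi_comb_eq_0)
  then obtain \<beta> \<gamma> where "choi_comb K r (\<lambda>m n. \<alpha> n m) = tensor_terms \<sigma> \<tau> \<beta> \<gamma>"
    using ptrace1_kernel_tensor_terms[OF \<sigma> \<tau>] by blast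
  then have "choi_comb K r (\<lambda>m n. \<alpha> n m) + tensor_terms \<sigma> \<tau> (\<lambda>a. - \<beta> a) (\<lambda>a b. - \<gamma> a b) = 0"
    by (simp add: tensor_terms_uminus)
  from choi_inj[rule_format, OF this] show "\<forall>m<r. \<forall>n<r. \<alpha> m n = 0"
    by blast
qed

theorem mainTheorem13:
  fixes K :: "nat \<Rightarrow> complex^'a^'b" and r :: nat
    and \<sigma> :: "nat \<Rightarrow> complex^'b^'b" and \<tau> :: "nat \<Rightarrow> complex^'a^'a"
  assumes trace_pres: "(\<Sum>m<r. qadj (K m) ** K m) = mat 1"
    and kraus_indep: "\<forall>c::nat \<Rightarrow> complex. (\<Sum>m<r. c m *s dket (K m)) = 0 \<longrightarrow> (\<forall>m<r. c m = 0)"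
    and sigma_basis: "traceless_herm_basis \<sigma>"
    and tau_basis: "traceless_herm_basis \<tau>"
  shows "(\<forall>\<alpha>::nat \<Rightarrow> nat \<Rightarrow> complex.
            (\<Sum>m<r. \<Sum>n<r. cscale (\<alpha> m n) (qadj (K m) ** K n)) = 0
            \<longrightarrow> (\<forall>m<r. \<forall>n<r. \<alpha> m n = 0))
     \<longleftrightarrow>
     (\<forall>(\<alpha>::nat \<Rightarrow> nat \<Rightarrow> complex) (\<beta>::nat \<Rightarrow> complex) (\<gamma>::nat \<Rightarrow> nat \<Rightarrow> complex).
            (\<Sum>m<r. \<Sum>n<r. cscale (\<alpha> m n) (ketbra (dket (K m)) (dket (K n))))
            + (\<Sum>a=2..CARD('b)^2. cscale (\<beta> a) (qtensor (\<sigma> a) (mat 1)))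
            + (\<Sum>a=2..CARD('b)^2. \<Sum>b=2..CARD('a)^2. cscale (\<gamma> a b) (qtensor (\<sigma> a) (\<tau> b))) = 0
            \<longrightarrow> (\<forall>m<r. \<forall>n<r. \<alpha> m n = 0)
              \<and> (\<forall>a\<in>{2..CARD('b)^2}. \<beta> a = 0)
              \<and> (\<forall>a\<in>{2..CARD('b)^2}. \<forall>b\<in>{2..CARD('a)^2}. \<gamma> a b = 0))"
proof -
  have choi_form: "\<And>\<alpha> \<beta> \<gamma>.
      (\<Sum>m<r. \<Sum>n<r. cscale (\<alpha> m n) (ketbra (dket (K m)) (dket (K n))))
      + (\<Sum>a=2..CARD('b)^2. cscale (\<beta> a) (qtensor (\<sigma> a) (mat 1)))
      + (\<Sum>a=2..CARD('b)^2. \<Sum>b=2..CARD('a)^2. cscale (\<gamma> a b) (qtensor (\<sigma> a) (\<tau> b)))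
      = choi_comb K r \<alpha> + tensor_terms \<sigma> \<tau> \<beta> \<gamma>"
    by (simp add: choi_comb_def tensor_terms_def add.assoc)
  have gram_form: "\<And>\<alpha>. (\<Sum>m<r. \<Sum>n<r. cscale (\<alpha> m n) (qadj (K m) ** K n)) = gram_comb K r \<alpha>"
    by (simp add: gram_comb_def)
  show ?thesis
    unfolding choi_form gram_form
    using choi_injective_if_gram_injective[OF sigma_basis tau_basis]
      gram_injective_if_choi_injective[OF sigma_basis tau_basis]
    by (rule iffI)
qed

end
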